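(* Let $(\Delta,G)$ be a stable admissible pair such that $\Delta$ is mutation-finite. Then the quotient $\Delta/G$ is mutation-finite.
   Context: Here $\Delta$ is identified with a skew-symmetrizable matrix $A=(a_{ij})\in M_{Q_0}(\mathbb Z)$, $Q_0$ finite ($DA$ skew-symmetric for a positive integer diagonal $D$). Mutation $\mu_k(B)=(b'_{ij})$: $b'_{ij}=-b_{ij}$ if $k\in\{i,j\}$, else $b_{ij}+\tfrac12(|b_{ik}|b_{kj}+b_{ik}|b_{kj}|)$; $B$ is mutation-finite if the set $\mathrm{Mut}(B)$ of matrices obtained from $B$ by finite sequences of mutations is finite. A permutation $g$ of $Q_0$ is an automorphism of $B$ if $b_{gi,gj}=b_{ij}$; a group $G$ of automorphisms is admissible ($(B,G)$ an admissible pair) if for distinct $i,j$ in the same orbit there is no path of length $1$ or $2$ from $i$ to $j$ in the quiver of $B$ ($b_{ij}\le0$ and no $k$ with $b_{ik}>0$, $b_{kj}>0$). With $\overline Q_0$ the set of orbits, $A/G\in M_{\overline Q_0}(\mathbb Z)$ has entries $(A/G)_{\mathbf i,\mathbf j}=\sum_{k\in\mathbf i}a_{k,j}$ ($j\in\mathbf j$). Orbit mutation $\mu^G_{\mathbf i}=\prod_{j\in\mathbf i}\mu_j$; $(A,G)$ is stable if for every finite sequence of orbits all pairs $(\mu^G_{\mathbf i_m}\circ\cdots\circ\mu^G_{\mathbf i_1}(A),G)$ are admissible. *)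

theory Defs
  imports Main
begin

type_synonym 'a emat = "'a \<Rightarrow> 'a \<Rightarrow> int"

definition skew_symmetrizable :: "'a emat \<Rightarrow> bool" where
  "skew_symmetrizable A \<longleftrightarrow>
     (\<exists>D :: 'a \<Rightarrow> int. (\<forall>i. D i > 0) \<and> (\<forall>i j. D i * A i j = - (D j * A j i)))"

text \<open>Matrix mutation at k. The quantity |b_ik| b_kj + b_ik |b_kj| is always even.\<close>
definition mut :: "'a \<Rightarrow> 'a emat \<Rightarrow> 'a emat" where
  "mut k B = (\<lambda>i j. if i = k \<or> j = k then - B i j
                    else B i j + (\<bar>B i k\<bar> * B k j + B i k * \<bar>B k j\<bar>) div 2)"

definition Mut_on :: "'a set \<Rightarrow> 'a emat \<Rightarrow> 'a emat set" where
  "Mut_on C B = {fold mut ks B | ks. set ks \<subseteq> C}"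

definition mutation_finite_on :: "'a set \<Rightarrow> 'a emat \<Rightarrow> bool" where
  "mutation_finite_on C B \<longleftrightarrow> finite (Mut_on C B)"

abbreviation mutation_finite :: "'a emat \<Rightarrow> bool" where
  "mutation_finite B \<equiv> mutation_finite_on UNIV B"

definition perm_group :: "('a \<Rightarrow> 'a) set \<Rightarrow> bool" where
  "perm_group G \<longleftrightarrow> id \<in> G \<and> (\<forall>g\<in>G. bij g \<and> inv g \<in> G) \<and> (\<forall>g\<in>G. \<forall>h\<in>G. g \<circ> h \<in> G)"

definition is_automorphism :: "'a emat \<Rightarrow> ('a \<Rightarrow> 'a) \<Rightarrow> bool" where
  "is_automorphism B g \<longleftrightarrow> bij g \<and> (\<forall>i j. B (g i) (g j) = B i j)"

definition orbit :: "('a \<Rightarrow> 'a) set \<Rightarrow> 'a \<Rightarrow> 'a set" where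
  "orbit G i = {g i | g. g \<in> G}"

definition orbits :: "('a \<Rightarrow> 'a) set \<Rightarrow> 'a set set" where
  "orbits G = range (orbit G)"

definition admissible :: "'a emat \<Rightarrow> ('a \<Rightarrow> 'a) set \<Rightarrow> bool" where
  "admissible B G \<longleftrightarrow> perm_group G \<and> (\<forall>g\<in>G. is_automorphism B g) \<and>
     (\<forall>i j. j \<in> orbit G i \<and> i \<noteq> j \<longrightarrow> B i j \<le> 0 \<and> \<not> (\<exists>k. B i k > 0 \<and> B k j > 0))"

definition quotient :: "'a emat \<Rightarrow> ('a \<Rightarrow> 'a) set \<Rightarrow> 'a set emat" where
  "quotient A G = (\<lambda>I J. if I \<in> orbits G \<and> J \<in> orbits G
                          then (\<Sum>k\<in>I. A k (SOME j. j \<in> J)) else 0)"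

text \<open>Orbit mutation: product of the mutations at all vertices of the orbit
  (performed in increasing order; the order is irrelevant for admissible pairs).\<close>
definition orbit_mut :: "'a::linorder set \<Rightarrow> 'a emat \<Rightarrow> 'a emat" where
  "orbit_mut I B = fold mut (sorted_list_of_set I) B"

definition stable :: "'a::linorder emat \<Rightarrow> ('a \<Rightarrow> 'a) set \<Rightarrow> bool" where
  "stable A G \<longleftrightarrow> (\<forall>Is. set Is \<subseteq> orbits G \<longrightarrow> admissible (fold orbit_mut Is A) G)"

end

theory Submission
  imports Defs
begin

text \<open>If \<open>(B, G)\<close> is admissible and \<open>B\<close> is skew-symmetrizable, then vertices of one
  orbit \<open>I\<close> are pairwise disconnected, so the orbit mutation \<open>\<mu>\<^sub>I\<close> adds to \<open>b\<^sub>x\<^sub>y\<close> the sum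
  of the corrections \<open>(|b\<^sub>x\<^sub>i| b\<^sub>i\<^sub>y + b\<^sub>x\<^sub>i |b\<^sub>i\<^sub>y|)/2\<close> over \<open>i \<in> I\<close>.  The absence of paths of
  length two inside orbits makes the entries \<open>b\<^sub>x\<^sub>i\<close> (\<open>x\<close> in an orbit \<open>J\<close>, \<open>i \<in> I\<close>) and \<open>b\<^sub>i\<^sub>y\<close>
  sign-coherent, and on sign-coherent families the correction is bilinear; together with
  \<open>G\<close>-invariance this gives \<open>(\<mu>\<^sub>I B)/G = \<mu>\<^sub>I (B/G)\<close>.  Stability keeps every matrix reached by
  orbit mutations admissible, so every mutation of \<open>A/G\<close> is the quotient of a mutation of
  \<open>A\<close>, and \<open>Mut(A/G)\<close> is covered by the image of the finite set \<open>Mut(A)\<close>.\<close>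

definition mut_term :: "int \<Rightarrow> int \<Rightarrow> int" where
  "mut_term a c = (if 0 < a \<and> 0 < c then a * c else if a < 0 \<and> c < 0 then - (a * c) else 0)"

lemma mut_apply:
  "mut k B i j = (if i = k \<or> j = k then - B i j else B i j + mut_term (B i k) (B k j))"
proof -
  have "(\<bar>a\<bar> * c + a * \<bar>c\<bar>) div 2 = mut_term a c" for a c :: int
    by (cases "0 < a"; cases "0 < c"; cases "a = 0"; cases "c = 0") (auto simp: mut_term_def abs_if)
  then show ?thesis unfolding mut_def by simp
qed

lemma mut_term_zero [simp]: "mut_term 0 c = 0" "mut_term a 0 = 0"
  unfolding mut_term_def by simp_all

lemma mut_term_uminus: "mut_term (- a) (- c) = - mut_term a c"
  unfolding mut_term_def by auto

lemma mut_term_nonneg: "0 \<le> a \<Longrightarrow> mut_term a c = a * max c 0"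
  unfolding mut_term_def by (auto simp: max_def)

lemma opposite_signs:
  fixes d d' x y :: int
  assumes "0 < d" "0 < d'" "d * x = - (d' * y)"
  shows "0 < x \<longleftrightarrow> y < 0"
  using assms
  by (metis mult_less_0_iff neg_0_less_iff_less zero_less_mult_iff neg_less_0_iff_less
      order_less_asym)

lemma mut_term_skew:
  fixes di dj dk bik bki bkj bjk :: int
  assumes pos: "0 < di" "0 < dj" "0 < dk"
    and ik: "di * bik = - (dk * bki)" and kj: "dk * bkj = - (dj * bjk)"
  shows "di * mut_term bik bkj = - (dj * mut_term bjk bki)"
proof -
  have "0 < bik \<longleftrightarrow> bki < 0" "0 < bki \<longleftrightarrow> bik < 0"
    using opposite_signs[OF pos(1,3) ik] opposite_signs[OF pos(3,1)] ik by auto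
  moreover have "0 < bkj \<longleftrightarrow> bjk < 0" "0 < bjk \<longleftrightarrow> bkj < 0"
    using opposite_signs[OF pos(3,2) kj] opposite_signs[OF pos(2,3)] kj by auto
  moreover have "di * (bik * bkj) = dj * (bjk * bki)"
    by (metis ik kj minus_mult_minus mult.assoc mult.commute)
  ultimately show ?thesis
    unfolding mut_term_def by (auto simp: algebra_simps)
qed

lemma skew_symmetrizable_mut:
  assumes "skew_symmetrizable B"
  shows "skew_symmetrizable (mut k B)"
proof -
  obtain D :: "'a \<Rightarrow> int"
    where pos: "\<And>i. 0 < D i" and skew: "\<And>i j. D i * B i j = - (D j * B j i)"
    using assms unfolding skew_symmetrizable_def by blast
  have "D i * mut k B i j = - (D j * mut k B j i)" for i j
    using skew[of i j] mut_term_skew[OF pos pos pos skew skew, of i k j]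
    by (auto simp: mut_apply algebra_simps)
  then show ?thesis
    unfolding skew_symmetrizable_def using pos by blast
qed

lemma skew_symmetrizable_fold_mut:
  "skew_symmetrizable B \<Longrightarrow> skew_symmetrizable (fold mut ks B)"
  by (induction ks arbitrary: B) (simp_all add: skew_symmetrizable_mut)

lemma skew_symmetrizable_sign:
  assumes "skew_symmetrizable B"
  shows "0 < B i j \<longleftrightarrow> B j i < 0"
  using assms opposite_signs unfolding skew_symmetrizable_def by blast

lemma skew_symmetrizable_diag:
  assumes "skew_symmetrizable B"
  shows "B i i = 0"
  using assms unfolding skew_symmetrizable_def by (metis add.inverse_unique mult_eq_0_iff
      less_irrefl neg_equal_zero)

lemma fold_mut_disconnected:
  assumes "distinct ks" and "\<forall>i\<in>set ks. \<forall>i'\<in>set ks. i \<noteq> i' \<longrightarrow> B i i' = 0"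
  shows "fold mut ks B x y = (if x \<in> set ks \<or> y \<in> set ks then - B x y
           else B x y + (\<Sum>i\<in>set ks. mut_term (B x i) (B i y)))"
  using assms
proof (induction ks arbitrary: B)
  case Nil
  then show ?case by simp
next
  case (Cons k ks)
  have k: "k \<notin> set ks" using Cons.prems by simp
  have k_disconnected: "B i k = 0" "B k i = 0" if "i \<in> set ks" for i
    using Cons.prems that k by fastforce+
  have "\<forall>i\<in>set ks. \<forall>i'\<in>set ks. i \<noteq> i' \<longrightarrow> mut k B i i' = 0"
    using Cons.prems k by (auto simp: mut_apply k_disconnected)
  with Cons.IH have IH: "fold mut ks (mut k B) x y =
      (if x \<in> set ks \<or> y \<in> set ks then - mut k B x y
       else mut k B x y + (\<Sum>i\<in>set ks. mut_term (mut k B x i) (mut k B i y)))"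
    (is "_ = ?step") using Cons.prems by simp
  show ?case (is "_ = ?rhs")
  proof -
    consider "x \<in> set ks \<or> y \<in> set ks" | "x \<notin> set ks" "y \<notin> set ks" "x = k \<or> y = k"
      | "x \<notin> set (k # ks)" "y \<notin> set (k # ks)"
      by auto
    then have "?step = ?rhs"
    proof cases
      case 1
      then show ?thesis using k by (auto simp: mut_apply k_disconnected)
    next
      case 2
      then have "(\<Sum>i\<in>set ks. mut_term (mut k B x i) (mut k B i y)) = 0"
        using k by (auto simp: mut_apply k_disconnected intro!: sum.neutral)
      then show ?thesis using 2 k by (auto simp: mut_apply)
    next
      case 3
      then have "(\<Sum>i\<in>set ks. mut_term (mut k B x i) (mut k B i y))
          = (\<Sum>i\<in>set ks. mut_term (B x i) (B i y))"
        using k by (auto simp: mut_apply k_disconnected intro!: sum.cong)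
      then show ?thesis using 3 k by (simp add: mut_apply)
    qed
    with IH show ?thesis by simp
  qed
qed

context
  fixes G :: "('a \<Rightarrow> 'a) set"
  assumes perm_group: "perm_group G"
begin

lemma orbit_refl: "i \<in> orbit G i"
  using perm_group unfolding perm_group_def orbit_def
  by (metis (mono_tags, lifting) id_apply mem_Collect_eq)

lemma orbit_sym: "j \<in> orbit G i \<Longrightarrow> i \<in> orbit G j"
proof -
  assume "j \<in> orbit G i"
  then obtain g where g: "g \<in> G" "j = g i" unfolding orbit_def by blast
  then have "bij g" "inv g \<in> G" using perm_group unfolding perm_group_def by auto
  then have "inv g j = i" using g by (simp add: bij_is_inj)
  then show ?thesis unfolding orbit_def using \<open>inv g \<in> G\<close> by blast
qed

lemma orbit_trans: "j \<in> orbit G i \<Longrightarrow> k \<in> orbit G j \<Longrightarrow> k \<in> orbit G i"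
proof -
  assume "j \<in> orbit G i" "k \<in> orbit G j"
  then obtain g h where "g \<in> G" "j = g i" "h \<in> G" "k = h j" unfolding orbit_def by blast
  then have "h \<circ> g \<in> G" "k = (h \<circ> g) i" using perm_group unfolding perm_group_def by auto
  then show ?thesis unfolding orbit_def by blast
qed

lemma orbits_eq_orbit: "I \<in> orbits G \<Longrightarrow> i \<in> I \<Longrightarrow> I = orbit G i"
  unfolding orbits_def using orbit_sym orbit_trans by blast

lemma orbits_nonempty: "I \<in> orbits G \<Longrightarrow> I \<noteq> {}"
  unfolding orbits_def using orbit_refl by auto

lemma orbits_disjoint: "I \<in> orbits G \<Longrightarrow> J \<in> orbits G \<Longrightarrow> i \<in> I \<Longrightarrow> i \<in> J \<Longrightarrow> I = J"
  using orbits_eq_orbit by metis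

lemma orbits_image_eq:
  assumes "g \<in> G" "I \<in> orbits G"
  shows "g ` I = I"
proof -
  have subset: "h ` I \<subseteq> I" if "h \<in> G" for h
    using that assms(2) orbits_eq_orbit orbit_trans unfolding orbit_def by blast
  have "bij g" "inv g \<in> G"
    using assms(1) perm_group unfolding perm_group_def by auto
  then have "I \<subseteq> g ` inv g ` I"
    by (simp add: image_comp surj_f_inv_f[OF bij_is_surj])
  also have "\<dots> \<subseteq> g ` I"
    using subset[OF \<open>inv g \<in> G\<close>] by (rule image_mono)
  finally show ?thesis
    using subset[OF assms(1)] by blast
qed

end

definition sign_coherent :: "('b \<Rightarrow> int) \<Rightarrow> 'b set \<Rightarrow> bool" where
  "sign_coherent f S \<longleftrightarrow> (\<forall>x\<in>S. 0 \<le> f x) \<or> (\<forall>x\<in>S. f x \<le> 0)"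

lemma sign_coherentI:
  "(\<And>x y. x \<in> S \<Longrightarrow> y \<in> S \<Longrightarrow> \<not> (f x < 0 \<and> 0 < f y)) \<Longrightarrow> sign_coherent f S"
  unfolding sign_coherent_def by force

lemma sign_coherent_uminus: "sign_coherent f S \<Longrightarrow> sign_coherent (\<lambda>x. - f x) S"
  unfolding sign_coherent_def by auto

lemma sum_max_zero:
  assumes "sign_coherent c I"
  shows "(\<Sum>i\<in>I. max (c i) 0) = max (sum c I) 0"
  using assms unfolding sign_coherent_def
proof
  assume "\<forall>i\<in>I. 0 \<le> c i"
  then show ?thesis by (simp add: sum_nonneg max_absorb1)
next
  assume "\<forall>i\<in>I. c i \<le> 0"
  then show ?thesis by (simp add: sum_nonpos max_absorb2)
qed

lemma sum_mut_term_nonneg: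
  fixes a :: "'b \<Rightarrow> 'c \<Rightarrow> int"
  assumes "i0 \<in> I"
    and col: "\<And>i. i \<in> I \<Longrightarrow> (\<Sum>x\<in>J. a x i) = (\<Sum>x\<in>J. a x i0)"
    and nonneg: "\<And>x i. x \<in> J \<Longrightarrow> i \<in> I \<Longrightarrow> 0 \<le> a x i"
    and "sign_coherent c I"
  shows "(\<Sum>x\<in>J. \<Sum>i\<in>I. mut_term (a x i) (c i)) = mut_term (\<Sum>x\<in>J. a x i0) (sum c I)"
proof -
  have "(\<Sum>x\<in>J. \<Sum>i\<in>I. mut_term (a x i) (c i)) = (\<Sum>x\<in>J. \<Sum>i\<in>I. a x i * max (c i) 0)"
    using nonneg by (simp add: mut_term_nonneg)
  also have "\<dots> = (\<Sum>i\<in>I. (\<Sum>x\<in>J. a x i) * max (c i) 0)"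
    by (subst sum.swap) (simp add: sum_distrib_right)
  also have "\<dots> = (\<Sum>i\<in>I. (\<Sum>x\<in>J. a x i0) * max (c i) 0)"
    using col by simp
  also have "\<dots> = (\<Sum>x\<in>J. a x i0) * max (sum c I) 0"
    by (simp add: sum_max_zero[OF \<open>sign_coherent c I\<close>, symmetric] sum_distrib_left)
  also have "\<dots> = mut_term (\<Sum>x\<in>J. a x i0) (sum c I)"
    using nonneg \<open>i0 \<in> I\<close> by (simp add: mut_term_nonneg sum_nonneg)
  finally show ?thesis .
qed

lemma sum_mut_term_sign_coherent:
  fixes a :: "'b \<Rightarrow> 'c \<Rightarrow> int"
  assumes "i0 \<in> I"
    and col: "\<And>i. i \<in> I \<Longrightarrow> (\<Sum>x\<in>J. a x i) = (\<Sum>x\<in>J. a x i0)"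
    and a: "sign_coherent (\<lambda>(x, i). a x i) (J \<times> I)" and c: "sign_coherent c I"
  shows "(\<Sum>x\<in>J. \<Sum>i\<in>I. mut_term (a x i) (c i)) = mut_term (\<Sum>x\<in>J. a x i0) (sum c I)"
proof (cases "\<forall>x\<in>J. \<forall>i\<in>I. 0 \<le> a x i")
  case True
  show ?thesis
    using True by (intro sum_mut_term_nonneg[where a = a, OF \<open>i0 \<in> I\<close> col _ c]) auto
next
  case False
  with a have "\<forall>(x, i)\<in>J \<times> I. a x i \<le> 0"
    unfolding sign_coherent_def by auto
  then have nonpos: "\<And>x i. x \<in> J \<Longrightarrow> i \<in> I \<Longrightarrow> a x i \<le> 0"
    by blast
  have "(\<Sum>x\<in>J. \<Sum>i\<in>I. mut_term (- a x i) (- c i))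
      = mut_term (\<Sum>x\<in>J. - a x i0) (\<Sum>i\<in>I. - c i)"
    using nonpos col
    by (intro sum_mut_term_nonneg[where a = "\<lambda>x i. - a x i",
          OF \<open>i0 \<in> I\<close> _ _ sign_coherent_uminus[OF c]])
      (auto simp: sum_negf)
  then show ?thesis by (simp add: mut_term_uminus sum_negf)
qed

lemma admissible_perm_group: "admissible B G \<Longrightarrow> perm_group G"
  unfolding admissible_def by simp

lemma admissible_automorphism: "admissible B G \<Longrightarrow> g \<in> G \<Longrightarrow> B (g i) (g j) = B i j"
  unfolding admissible_def is_automorphism_def by blast

lemma admissible_no_short_path:
  assumes "admissible B G" "j \<in> orbit G i" "i \<noteq> j"
  shows "B i j \<le> 0" and "\<not> (0 < B i k \<and> 0 < B k j)"
  using assms unfolding admissible_def by blast+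

context
  fixes B :: "'a emat" and G :: "('a \<Rightarrow> 'a) set"
  assumes admissible: "admissible B G" and skew: "skew_symmetrizable B"
begin

lemma orbit_entry_eq_zero:
  assumes "i' \<in> orbit G i"
  shows "B i i' = 0"
proof (cases "i = i'")
  case True
  then show ?thesis using skew_symmetrizable_diag[OF skew] by simp
next
  case False
  have "i \<in> orbit G i'"
    using orbit_sym[OF admissible_perm_group[OF admissible] assms] .
  then have "B i i' \<le> 0" "B i' i \<le> 0"
    using admissible_no_short_path(1)[OF admissible] assms False by metis+
  then show ?thesis
    using skew_symmetrizable_sign[OF skew, of i' i] by linarith
qed

lemma orbit_row_no_mixed_signs:
  assumes "i' \<in> orbit G i"
  shows "\<not> (B z i < 0 \<and> 0 < B z i')"
  using admissible_no_short_path(2)[OF admissible assms, of z]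
    skew_symmetrizable_sign[OF skew, of i z]
  by (cases "i = i'") auto

lemma orbit_column_no_mixed_signs:
  assumes "i' \<in> orbit G i"
  shows "\<not> (0 < B i y \<and> B i' y < 0)"
  using admissible_no_short_path(2)[OF admissible assms, of y]
    skew_symmetrizable_sign[OF skew, of y i']
  by (cases "i = i'") auto

lemma sign_coherent_orbit_column:
  assumes "I \<in> orbits G"
  shows "sign_coherent (\<lambda>i. B i y) I"
proof (rule sign_coherentI)
  fix i i' assume "i \<in> I" "i' \<in> I"
  then have "i \<in> orbit G i'"
    using orbits_eq_orbit[OF admissible_perm_group[OF admissible] assms] by blast
  then show "\<not> (B i y < 0 \<and> 0 < B i' y)"
    using orbit_column_no_mixed_signs by blast
qed

lemma sign_coherent_orbit_block:
  assumes I: "I \<in> orbits G" and J: "J \<in> orbits G"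
  shows "sign_coherent (\<lambda>(x, i). B x i) (J \<times> I)"
proof (rule sign_coherentI, clarsimp)
  fix x i x' i' assume "x \<in> J" "i \<in> I" "x' \<in> J" "i' \<in> I" "B x i < 0" "0 < B x' i'"
  then obtain g where g: "g \<in> G" "x = g x'"
    using orbits_eq_orbit[OF admissible_perm_group[OF admissible] J] unfolding orbit_def by blast
  obtain i'' where "i'' \<in> I" "i = g i''"
    using orbits_image_eq[OF admissible_perm_group[OF admissible] g(1) I] \<open>i \<in> I\<close> by blast
  then have "B x' i'' < 0" "i' \<in> orbit G i''"
    using admissible_automorphism[OF admissible g(1)] g(2) \<open>B x i < 0\<close> \<open>i' \<in> I\<close>
      orbits_eq_orbit[OF admissible_perm_group[OF admissible] I] by auto
  then show False
    using orbit_row_no_mixed_signs \<open>0 < B x' i'\<close> by blast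
qed

lemma sum_orbit_column_automorphism:
  assumes "J \<in> orbits G" "g \<in> G"
  shows "(\<Sum>x\<in>J. B x (g k)) = (\<Sum>x\<in>J. B x k)"
proof -
  have "inj g"
    using admissible_perm_group[OF admissible] assms(2) unfolding perm_group_def
    by (auto simp: bij_is_inj)
  moreover have "g ` J = J"
    using orbits_image_eq[OF admissible_perm_group[OF admissible] assms(2,1)] .
  ultimately have "bij_betw g J J"
    by (simp add: bij_betw_def inj_on_subset[OF _ subset_UNIV])
  then have "(\<Sum>x\<in>J. B x (g k)) = (\<Sum>x\<in>J. B (g x) (g k))"
    by (rule sum.reindex_bij_betw[symmetric])
  also have "\<dots> = (\<Sum>x\<in>J. B x k)"
    using admissible_automorphism[OF admissible assms(2)] by simp
  finally show ?thesis .
qed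

lemma quotient_eq_sum:
  assumes J: "J \<in> orbits G" and K: "K \<in> orbits G" and "k \<in> K"
  shows "quotient B G J K = (\<Sum>x\<in>J. B x k)"
proof -
  have "(SOME k. k \<in> K) \<in> K"
    using orbits_nonempty[OF admissible_perm_group[OF admissible] K] by (simp add: some_in_eq)
  then obtain g where "g \<in> G" "k = g (SOME k. k \<in> K)"
    using orbits_eq_orbit[OF admissible_perm_group[OF admissible] K] \<open>k \<in> K\<close>
    unfolding orbit_def by blast
  then show ?thesis
    using J K sum_orbit_column_automorphism[OF J] unfolding quotient_def by presburger
qed

end

lemma orbit_mut_apply:
  fixes B :: "'a::linorder emat"
  assumes "admissible B G" "skew_symmetrizable B" "I \<in> orbits G" "finite I"
  shows "orbit_mut I B x y = (if x \<in> I \<or> y \<in> I then - B x y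
           else B x y + (\<Sum>i\<in>I. mut_term (B x i) (B i y)))"
proof -
  have "B i i' = 0" if "i \<in> I" "i' \<in> I" for i i'
    using orbit_entry_eq_zero[OF assms(1,2)]
      orbits_eq_orbit[OF admissible_perm_group[OF assms(1)] assms(3)] that by blast
  then show ?thesis
    using fold_mut_disconnected[of "sorted_list_of_set I" B x y] \<open>finite I\<close>
    unfolding orbit_mut_def by simp
qed

lemma quotient_orbit_mut:
  fixes B :: "'a::{finite,linorder} emat"
  assumes adm: "admissible B G" and skew: "skew_symmetrizable B" and I: "I \<in> orbits G"
  shows "quotient (orbit_mut I B) G = mut I (quotient B G)"
proof (intro ext)
  fix J K
  show "quotient (orbit_mut I B) G J K = mut I (quotient B G) J K"
  proof (cases "J \<in> orbits G \<and> K \<in> orbits G")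
    case False
    then show ?thesis unfolding quotient_def mut_apply using I by auto
  next
    case True
    then have J: "J \<in> orbits G" and K: "K \<in> orbits G" by auto
    have pg: "perm_group G" using admissible_perm_group[OF adm] .
    define y where "y = (SOME k. k \<in> K)"
    have "y \<in> K" unfolding y_def using orbits_nonempty[OF pg K] by (simp add: some_in_eq)
    obtain i0 where "i0 \<in> I" using orbits_nonempty[OF pg I] by blast
    have quotient_JK: "quotient (orbit_mut I B) G J K = (\<Sum>x\<in>J. orbit_mut I B x y)"
      unfolding quotient_def y_def using J K by simp
    note quotient_B = quotient_eq_sum[OF adm skew]
    show ?thesis
    proof (cases "J = I \<or> K = I")
      case True
      then have "x \<in> I \<or> y \<in> I" if "x \<in> J" for x using that \<open>y \<in> K\<close> by auto
      then have "quotient (orbit_mut I B) G J K = - quotient B G J K"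
        unfolding quotient_JK orbit_mut_apply[OF adm skew I finite] quotient_B[OF J K \<open>y \<in> K\<close>]
        by (simp add: sum_negf)
      then show ?thesis using True by (simp add: mut_apply)
    next
      case False
      then have "x \<notin> I" if "x \<in> J" for x using orbits_disjoint[OF pg I J] that by blast
      moreover have "y \<notin> I" using orbits_disjoint[OF pg I K] \<open>y \<in> K\<close> False by blast
      ultimately have "quotient (orbit_mut I B) G J K
          = (\<Sum>x\<in>J. B x y) + (\<Sum>x\<in>J. \<Sum>i\<in>I. mut_term (B x i) (B i y))"
        unfolding quotient_JK orbit_mut_apply[OF adm skew I finite] by (simp add: sum.distrib)
      also have "\<dots> = (\<Sum>x\<in>J. B x y) + mut_term (\<Sum>x\<in>J. B x i0) (\<Sum>i\<in>I. B i y)"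
      proof -
        have "(\<Sum>x\<in>J. B x i) = (\<Sum>x\<in>J. B x i0)" if "i \<in> I" for i
          using quotient_B[OF J I that] quotient_B[OF J I \<open>i0 \<in> I\<close>] by simp
        from sum_mut_term_sign_coherent[where a = B, OF \<open>i0 \<in> I\<close> this
            sign_coherent_orbit_block[OF adm skew I J] sign_coherent_orbit_column[OF adm skew I]]
        show ?thesis by simp
      qed
      also have "\<dots> = quotient B G J K + mut_term (quotient B G J I) (quotient B G I K)"
        unfolding quotient_B[OF J K \<open>y \<in> K\<close>] quotient_B[OF J I \<open>i0 \<in> I\<close>]
          quotient_B[OF I K \<open>y \<in> K\<close>] ..
      also have "\<dots> = mut I (quotient B G) J K"
        using False by (simp add: mut_apply)
      finally show ?thesis .
    qed
  qed
qed

lemma fold_orbit_mut: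
  "fold orbit_mut Is B = fold mut (concat (map sorted_list_of_set Is)) B"
  by (induction Is arbitrary: B) (simp_all add: orbit_mut_def)

lemma quotient_fold_orbit_mut:
  fixes A :: "'a::{finite,linorder} emat"
  assumes "skew_symmetrizable A" "stable A G" "set Is \<subseteq> orbits G"
  shows "quotient (fold orbit_mut Is A) G = fold mut Is (quotient A G)"
  using assms(3)
proof (induction Is rule: rev_induct)
  case Nil
  then show ?case by simp
next
  case (snoc I Is)
  have "admissible (fold orbit_mut Is A) G"
    using \<open>stable A G\<close> snoc.prems unfolding stable_def by simp
  moreover have "skew_symmetrizable (fold orbit_mut Is A)"
    unfolding fold_orbit_mut using skew_symmetrizable_fold_mut[OF \<open>skew_symmetrizable A\<close>] .
  moreover have "I \<in> orbits G"
    using snoc.prems by simp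
  ultimately have "quotient (orbit_mut I (fold orbit_mut Is A)) G
      = mut I (quotient (fold orbit_mut Is A) G)"
    by (rule quotient_orbit_mut)
  with snoc show ?case by simp
qed

lemma Mut_on_orbits_quotient_subset:
  fixes A :: "'a::{finite,linorder} emat"
  assumes "skew_symmetrizable A" "stable A G"
  shows "Mut_on (orbits G) (quotient A G) \<subseteq> (\<lambda>B. quotient B G) ` Mut_on UNIV A"
proof
  fix Q assume "Q \<in> Mut_on (orbits G) (quotient A G)"
  then obtain Is where "set Is \<subseteq> orbits G" "Q = fold mut Is (quotient A G)"
    unfolding Mut_on_def by blast
  then have "Q = quotient (fold mut (concat (map sorted_list_of_set Is)) A) G"
    using quotient_fold_orbit_mut[OF assms] fold_orbit_mut by metis
  then show "Q \<in> (\<lambda>B. quotient B G) ` Mut_on UNIV A"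
    unfolding Mut_on_def by blast
qed

theorem mainTheorem17:
  fixes A :: "'a::{finite,linorder} emat" and G :: "('a \<Rightarrow> 'a) set"
  assumes "skew_symmetrizable A"
    and "admissible A G"
    and "stable A G"
    and "mutation_finite A"
  shows "mutation_finite_on (orbits G) (quotient A G)"
proof -
  \<comment> \<open>Admissibility of \<open>A\<close> is the case \<open>Is = []\<close> of stability and is not needed separately.\<close>
  have "Mut_on (orbits G) (quotient A G) \<subseteq> (\<lambda>B. quotient B G) ` Mut_on UNIV A"
    using Mut_on_orbits_quotient_subset[OF assms(1,3)] .
  moreover have "finite ((\<lambda>B. quotient B G) ` Mut_on UNIV A)"
    using \<open>mutation_finite A\<close> unfolding mutation_finite_on_def by simp
  ultimately show ?thesis
    unfolding mutation_finite_on_def by (rule finite_subset)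
qed

end
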